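(* Let $v$ be the linear classifier on $[0,1]^n$ defined by $\vec w\in\mathbb{R}^n$ and $q\in\mathbb{R}$, and let $i\ne j$. If $w_i\ge w_j>0$, then $\chi_i(\vec w;q)\ge\chi_j(\vec w;q)$.
   Context: The linear classifier defined by $\vec w$ and $q$ is $v:[0,1]^n\to\{0,1\}$, $v(\vec x)=1$ iff $\vec x\cdot\vec w\ge q$. For $\vec x\in[0,1]^n$, $b\in[0,1]$, $(\vec x_{-i},b)$ is $\vec x$ with $i$-th coordinate replaced by $b$. $\chi_i(\vec w;q)=\int_0^1\int_{[0,1]^n}|v(\vec x_{-i},b)-v(\vec x)|\,d\vec x\,db$. *)

theory Defs
  imports "HOL-Analysis.Analysis"
begin

definition lin_classifier :: "real ^ 'n \<Rightarrow> real \<Rightarrow> real ^ 'n \<Rightarrow> real" where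
  "lin_classifier w q x = (if x \<bullet> w \<ge> q then 1 else 0)"

definition repl_coord :: "real ^ 'n \<Rightarrow> 'n \<Rightarrow> real \<Rightarrow> real ^ 'n" where
  "repl_coord x i b = (\<chi> k. if k = i then b else x $ k)"

definition chi_infl :: "'n \<Rightarrow> real ^ 'n \<Rightarrow> real \<Rightarrow> real" where
  "chi_infl i w q = integral {0..1} (\<lambda>b. integral (cbox 0 1)
      (\<lambda>x. \<bar>lin_classifier w q (repl_coord x i b) - lin_classifier w q x\<bar>))"

end

theory Submission
  imports Defs
begin

text \<open>
  \<open>\<chi>\<^sub>k\<close> is the Lebesgue measure of the set \<open>S\<^sub>k\<close> of pairs \<open>(b, x) \<in> [0,1] \<times> [0,1]\<^sup>n\<close> for
  which replacing \<open>x\<^sub>k\<close> by \<open>b\<close> changes \<open>v\<close>. Fix all coordinates of \<open>x\<close> except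
  \<open>a = x\<^sub>i\<close> and \<open>c = x\<^sub>j\<close>; then everything depends only on \<open>P s t \<longleftrightarrow> w\<^sub>i s + w\<^sub>j t + r \<ge> q\<close>
  (\<open>r\<close> collecting the other coordinates),
  which is monotone in both arguments and, as \<open>w\<^sub>i \<ge> w\<^sub>j \<ge> 0\<close>, satisfies \<open>P t s \<Longrightarrow> P s t\<close>
  for \<open>t \<le> s\<close>. The volume-preserving involutions swapping \<open>x\<^sub>i\<close> with \<open>x\<^sub>j\<close>, and \<open>b\<close> with
  \<open>x\<^sub>i\<close> (resp. \<open>x\<^sub>j\<close>), permute the roles of \<open>a, b, c\<close>. Summed over these three images the
  indicator of \<open>S\<^sub>j\<close> is pointwise dominated by that of \<open>S\<^sub>i\<close> (a finite check on the values
  of \<open>P\<close> on \<open>{a, b, c}\<^sup>2\<close>), so integrating gives \<open>3 \<mu>(S\<^sub>j) \<le> 3 \<mu>(S\<^sub>i)\<close>.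
\<close>

lemma borel_measurable_linear:
  fixes f :: "'a::euclidean_space \<Rightarrow> 'b::euclidean_space"
  assumes "linear f"
  shows "f \<in> borel_measurable borel"
  using assms by (simp add: linear_continuous_on linear_conv_bounded_linear borel_measurable_continuous_onI)

lemma distr_lborel_basis_involution:
  fixes T :: "'a::euclidean_space \<Rightarrow> 'a"
  assumes lin: "linear T" and inv: "\<And>x. T (T x) = x"
    and T_Basis: "\<And>b. b \<in> Basis \<Longrightarrow> T b \<in> Basis"
    and adj: "\<And>x b. b \<in> Basis \<Longrightarrow> T x \<bullet> b = x \<bullet> T b"
  shows "distr lborel borel T = lborel"
proof (rule lborel_eqI[symmetric])
  fix l u :: 'a
  assume le: "\<And>b. b \<in> Basis \<Longrightarrow> l \<bullet> b \<le> u \<bullet> b"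
  have T_box: "T -` box l u = box (T l) (T u)"
  proof -
    have "l \<bullet> T b < x \<bullet> T b \<and> x \<bullet> T b < u \<bullet> T b \<longleftrightarrow> T l \<bullet> b < T x \<bullet> b \<and> T x \<bullet> b < T u \<bullet> b"
      if "b \<in> Basis" for x b
      using that adj inv by metis
    then show ?thesis
      using T_Basis inv by (simp add: set_eq_iff mem_box) metis
  qed
  have bij: "bij_betw T Basis Basis"
    by (rule bij_betwI[where g = T]) (auto simp: T_Basis inv)
  have "emeasure (distr lborel borel T) (box l u) = emeasure lborel (box (T l) (T u))"
    using lin by (simp add: emeasure_distr T_box borel_measurable_linear)
  also have "\<dots> = (\<Prod>b\<in>Basis. (u - l) \<bullet> T b)"
    using le T_Basis by (simp add: adj inner_diff_left)
  also have "\<dots> = (\<Prod>b\<in>Basis. (u - l) \<bullet> b)"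
    using prod.reindex_bij_betw[OF bij, of "\<lambda>b. (u - l) \<bullet> b"] by simp
  finally show "emeasure (distr lborel borel T) (box l u) = (\<Prod>b\<in>Basis. (u - l) \<bullet> b)" .
qed simp

lemma nn_integral_indicator_comp_preserving:
  fixes T :: "'a::euclidean_space \<Rightarrow> 'a"
  assumes "linear T" and T: "distr lborel borel T = lborel" and A: "A \<in> sets borel"
  shows "(\<integral>\<^sup>+p. indicator A (T p) \<partial>lborel) = emeasure lborel A"
proof -
  have "T \<in> borel_measurable borel"
    using assms by (simp add: borel_measurable_linear)
  then have "(\<integral>\<^sup>+p. indicator A (T p) \<partial>lborel) = (\<integral>\<^sup>+p. indicator A p \<partial>distr lborel borel T)"
    using A by (subst nn_integral_distr) auto
  also have "\<dots> = emeasure lborel A"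
    using A by (simp add: T)
  finally show ?thesis .
qed

lemma nn_integral_indicator_sum_preserving:
  fixes T T' :: "'a::euclidean_space \<Rightarrow> 'a"
  assumes T: "linear T" "distr lborel borel T = lborel"
    and T': "linear T'" "distr lborel borel T' = lborel" and A: "A \<in> sets borel"
  shows "(\<integral>\<^sup>+p. ennreal (indicator A p + indicator A (T p) + indicator A (T' p)) \<partial>lborel)
    = 3 * emeasure lborel A"
proof -
  have [measurable]: "T \<in> borel_measurable borel" "T' \<in> borel_measurable borel" "A \<in> sets borel"
    using T T' A by (simp_all add: borel_measurable_linear)
  have "(\<integral>\<^sup>+p. ennreal (indicator A p + indicator A (T p) + indicator A (T' p)) \<partial>lborel)
      = (\<integral>\<^sup>+p. indicator A p \<partial>lborel) + (\<integral>\<^sup>+p. indicator A (T p) \<partial>lborel)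
        + (\<integral>\<^sup>+p. indicator A (T' p) \<partial>lborel)"
    by (simp add: ennreal_plus nn_integral_add ennreal_indicator del: ennreal_plus_if)
  also have "\<dots> = emeasure lborel A + emeasure lborel A + emeasure lborel A"
    using T T' A by (simp add: nn_integral_indicator_comp_preserving)
  also have "\<dots> = 3 * emeasure lborel A"
    by (metis distrib_right mult_1 numeral_Bit1 numeral_One)
  finally show ?thesis .
qed

lemma integral_measure_slices:
  fixes S :: "(real \<times> 'a::euclidean_space) set"
  assumes S: "S \<in> sets borel" and sub: "S \<subseteq> {l..u} \<times> K" and K: "bounded K"
  shows "integral {l..u} (\<lambda>b. measure lborel (Pair b -` S)) = measure lborel S"
proof -
  define h where "h b = measure lborel (Pair b -` S)" for b
  have S_prod: "S \<in> sets (lborel \<Otimes>\<^sub>M (lborel :: 'a measure))"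
    using S by (subst lborel_prod) simp
  have slice_finite: "emeasure lborel (Pair b -` S) < \<infinity>" for b
    using sub by (intro emeasure_bounded_finite bounded_subset[OF K]) auto
  have S_finite: "emeasure lborel S < \<infinity>"
    using sub by (intro emeasure_bounded_finite bounded_subset[OF bounded_Times[OF _ K]]) auto
  have "(\<lambda>b. emeasure lborel (Pair b -` S)) \<in> borel_measurable (lborel :: real measure)"
    by (rule lborel.measurable_emeasure_Pair[OF S_prod])
  then have h_measurable: "h \<in> borel_measurable borel"
    unfolding h_def measure_def by measurable
  have "ennreal (measure lborel S) = emeasure lborel S"
    using S_finite by (intro emeasure_eq_ennreal_measure[symmetric]) auto
  also have "\<dots> = emeasure (lborel \<Otimes>\<^sub>M lborel) S"
    by (simp add: lborel_prod)
  also have "\<dots> = (\<integral>\<^sup>+b. emeasure lborel (Pair b -` S) \<partial>lborel)"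
    by (rule lborel.emeasure_pair_measure_alt[OF S_prod])
  also have "\<dots> = (\<integral>\<^sup>+b. ennreal (h b) \<partial>lborel)"
    unfolding h_def using slice_finite
    by (intro nn_integral_cong) (simp add: emeasure_eq_ennreal_measure less_top)
  finally have "(h has_integral measure lborel S) UNIV"
    by (intro nn_integral_has_integral h_measurable) (auto simp: h_def)
  moreover have "Pair b -` S = {}" if "b \<notin> {l..u}" for b
    using sub that by auto
  then have "(\<lambda>b. if b \<in> {l..u} then h b else 0) = h"
    by (auto simp: h_def fun_eq_iff)
  ultimately have "(h has_integral measure lborel S) {l..u}"
    using has_integral_restrict_UNIV[where s = "{l..u}" and f = h] by simp
  then show ?thesis
    unfolding h_def by (rule integral_unique)
qed

definition swap_coords :: "'n \<Rightarrow> 'n \<Rightarrow> real \<times> (real ^ 'n) \<Rightarrow> real \<times> (real ^ 'n)" where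
  "swap_coords i j = (\<lambda>(b, x). (b, \<chi> l. x $ (if l = i then j else if l = j then i else l)))"

definition exchange_coord :: "'n \<Rightarrow> real \<times> (real ^ 'n) \<Rightarrow> real \<times> (real ^ 'n)" where
  "exchange_coord k = (\<lambda>(b, x). (x $ k, repl_coord x k b))"

lemma Basis_prod_vec_cases:
  assumes "(b :: real \<times> (real ^ 'n)) \<in> Basis"
  obtains "b = (1, 0)" | m where "b = (0, axis m 1)"
  using assms by (auto simp: Basis_prod_def Basis_vec_def)

lemma Basis_prod_vec_memI:
  "(1, 0) \<in> (Basis :: (real \<times> (real ^ 'n)) set)"
  "(0, axis m 1) \<in> (Basis :: (real \<times> (real ^ 'n)) set)"
  by (auto simp: Basis_prod_def Basis_vec_def)

lemma swap_coords_Basis: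
  "swap_coords i j (1, 0) = (1, 0)"
  "swap_coords i j (0, axis m 1) = (0, axis (if m = i then j else if m = j then i else m) 1)"
  by (auto simp: swap_coords_def vec_eq_iff axis_def)

lemma exchange_coord_Basis:
  "exchange_coord k (1, 0) = (0, axis k 1)"
  "exchange_coord k (0, axis m 1) = (if m = k then (1, 0) else (0, axis m 1))"
  by (auto simp: exchange_coord_def repl_coord_def vec_eq_iff axis_def)

lemma linear_swap_coords: "linear (swap_coords i j)"
  by (rule linearI) (auto simp: swap_coords_def vec_eq_iff split: prod.splits)

lemma linear_exchange_coord: "linear (exchange_coord k)"
  by (rule linearI) (auto simp: exchange_coord_def repl_coord_def vec_eq_iff split: prod.splits)

lemma distr_lborel_swap_coords: "distr lborel borel (swap_coords i j) = lborel"
proof (rule distr_lborel_basis_involution[OF linear_swap_coords])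
  show "swap_coords i j (swap_coords i j p) = p" for p
    by (auto simp: swap_coords_def vec_eq_iff split: prod.splits)
  fix b :: "real \<times> (real ^ 'a)"
  assume "b \<in> Basis"
  then show "swap_coords i j b \<in> Basis" "swap_coords i j x \<bullet> b = x \<bullet> swap_coords i j b" for x
    by (cases rule: Basis_prod_vec_cases; simp only: swap_coords_Basis;
        auto simp: Basis_prod_vec_memI inner_prod_def inner_axis swap_coords_def split: prod.splits)+
qed

lemma distr_lborel_exchange_coord: "distr lborel borel (exchange_coord k) = lborel"
proof (rule distr_lborel_basis_involution[OF linear_exchange_coord])
  show "exchange_coord k (exchange_coord k p) = p" for p
    by (auto simp: exchange_coord_def repl_coord_def vec_eq_iff split: prod.splits)
  fix b :: "real \<times> (real ^ 'a)"
  assume "b \<in> Basis"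
  then show "exchange_coord k b \<in> Basis" "exchange_coord k x \<bullet> b = x \<bullet> exchange_coord k b" for x
    by (cases rule: Basis_prod_vec_cases; simp only: exchange_coord_Basis;
        auto simp: Basis_prod_vec_memI inner_prod_def inner_axis exchange_coord_def repl_coord_def
          split: prod.splits)+
qed

definition flip_set :: "real ^ 'n \<Rightarrow> real \<Rightarrow> 'n \<Rightarrow> (real \<times> (real ^ 'n)) set" where
  "flip_set w q k = {(b, x). b \<in> {0..1} \<and> x \<in> cbox 0 1 \<and>
      ((q \<le> repl_coord x k b \<bullet> w) \<noteq> (q \<le> x \<bullet> w))}"

lemma flip_set_subset: "flip_set w q k \<subseteq> {0..1} \<times> cbox 0 1"
  by (auto simp: flip_set_def)

lemma emeasure_flip_set_finite: "emeasure lborel (flip_set w q k) < \<infinity>"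
  using flip_set_subset[of w q k]
  by (intro emeasure_bounded_finite bounded_subset[OF bounded_Times]) auto

lemma inner_repl_coord: "repl_coord x k b \<bullet> w = x \<bullet> w + (b - x $ k) * w $ k"
proof -
  have "repl_coord x k b = x + (b - x $ k) *\<^sub>R axis k 1"
    by (auto simp: repl_coord_def vec_eq_iff axis_def)
  then show ?thesis
    by (simp add: inner_add_left inner_axis')
qed

lemma flip_set_borel:
  fixes w :: "real ^ 'n"
  shows "flip_set w q k \<in> sets borel"
proof -
  define after where "after p = (q \<le> snd p \<bullet> w + (fst p - snd p $ k) * w $ k)"
    for p :: "real \<times> (real ^ 'n)"
  define before where "before p = (q \<le> snd p \<bullet> w)" for p :: "real \<times> (real ^ 'n)"
  have closed: "closed (Collect after)" "closed (Collect before)"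
    unfolding after_def before_def by (intro closed_Collect_le continuous_intros)+
  have "flip_set w q k = ({0..1} \<times> cbox 0 1) \<inter> ((Collect after - Collect before) \<union> (Collect before - Collect after))"
    by (auto simp: flip_set_def after_def before_def inner_repl_coord)
  also have "\<dots> \<in> sets borel"
    using closed by (intro sets.Int sets.Un sets.Diff borel_closed closed_Times closed_cbox closed_atLeastAtMost)
  finally show ?thesis .
qed

lemma chi_infl_eq_measure: "chi_infl k w q = measure lborel (flip_set w q k)"
proof -
  let ?g = "\<lambda>b x. \<bar>lin_classifier w q (repl_coord x k b) - lin_classifier w q x\<bar>"
  have slice: "integral (cbox 0 1) (?g b) = measure lborel (Pair b -` flip_set w q k)"
    if b: "b \<in> {0..1}" for b
  proof -
    let ?F = "Pair b -` flip_set w q k"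
    have "flip_set w q k \<in> sets (lborel \<Otimes>\<^sub>M lborel)"
      by (subst lborel_prod) (simp add: flip_set_borel)
    then have "?F \<in> sets borel"
      using sets_Pair1 by simp
    moreover have "emeasure lborel ?F < \<infinity>"
      using flip_set_subset[of w q k] by (intro emeasure_bounded_finite bounded_subset[OF bounded_cbox]) auto
    ultimately have F_integral: "((\<lambda>x. 1) has_integral measure lborel ?F) ?F"
      by (rule has_integral_measure_lborel)
    have F_indicator: "(\<lambda>x. if x \<in> ?F then 1 else 0) = (\<lambda>x. if x \<in> cbox 0 1 then ?g b x else 0)"
      using b by (auto simp: flip_set_def lin_classifier_def fun_eq_iff)
    have "((\<lambda>x. if x \<in> cbox 0 1 then ?g b x else 0) has_integral measure lborel ?F) UNIV"
      using F_integral unfolding F_indicator[symmetric] has_integral_restrict_UNIV .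
    then show ?thesis
      unfolding has_integral_restrict_UNIV by (rule integral_unique)
  qed
  have "chi_infl k w q = integral {0..1} (\<lambda>b. measure lborel (Pair b -` flip_set w q k))"
    unfolding chi_infl_def by (rule integral_cong) (rule slice)
  also have "\<dots> = measure lborel (flip_set w q k)"
    by (rule integral_measure_slices[OF flip_set_borel flip_set_subset bounded_cbox])
  finally show ?thesis .
qed

lemma row_flips_le_column_flips:
  fixes P :: "real \<Rightarrow> real \<Rightarrow> bool"
  assumes mono: "\<And>s s' t t'. s \<le> s' \<Longrightarrow> t \<le> t' \<Longrightarrow> P s t \<Longrightarrow> P s' t'"
    and swap: "\<And>s t. t \<le> s \<Longrightarrow> P t s \<Longrightarrow> P s t"
  shows "of_bool (P a b \<noteq> P a c) + of_bool (P b a \<noteq> P b c) + of_bool (P c b \<noteq> P c a)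
     \<le> (of_bool (P b a \<noteq> P c a) + of_bool (P c b \<noteq> P a b) + of_bool (P b c \<noteq> P a c) :: real)"
proof -
  \<comment> \<open>Both sides are invariant under permutations of \<open>a, b, c\<close> (up to the orientation of \<open>\<noteq>\<close>),
    so it suffices to treat sorted arguments.\<close>
  have sorted: "of_bool (P x y \<noteq> P x z) + of_bool (P y x \<noteq> P y z) + of_bool (P z x \<noteq> P z y)
     \<le> (of_bool (P y x \<noteq> P z x) + of_bool (P x y \<noteq> P z y) + of_bool (P x z \<noteq> P y z) :: real)"
    if "x \<le> y" "y \<le> z" for x y z
  proof -
    have "x \<le> z" using that by linarith
    with that have "(P x y \<longrightarrow> P x z) \<and> (P x y \<longrightarrow> P y x) \<and> (P x y \<longrightarrow> P z y)
      \<and> (P x z \<longrightarrow> P y z) \<and> (P x z \<longrightarrow> P z x) \<and> (P y x \<longrightarrow> P z x)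
      \<and> (P y x \<longrightarrow> P y z) \<and> (P y z \<longrightarrow> P z y) \<and> (P z x \<longrightarrow> P z y)"
      using mono[of x x y z] mono[of x z y y] mono[of y z x x] mono[of x y z z] mono[of y y x z]
        mono[of z z x y] swap[of x y] swap[of x z] swap[of y z]
      by simp
    then show ?thesis
      by (cases "P x y"; cases "P x z"; cases "P y x"; cases "P y z"; cases "P z x"; cases "P z y") simp_all
  qed
  consider "a \<le> b" "b \<le> c" | "a \<le> c" "c \<le> b" | "b \<le> a" "a \<le> c" | "b \<le> c" "c \<le> a"
    | "c \<le> a" "a \<le> b" | "c \<le> b" "b \<le> a"
    by linarith
  then show ?thesis
    by cases (drule (1) sorted, simp only: eq_commute add_ac)+
qed

lemma inner_eq_off_two_coords:
  fixes x y w :: "real ^ 'n"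
  assumes "i \<noteq> j" and "\<And>l. l \<noteq> i \<Longrightarrow> l \<noteq> j \<Longrightarrow> y $ l = x $ l"
  shows "y \<bullet> w = x \<bullet> w + (y $ i - x $ i) * w $ i + (y $ j - x $ j) * w $ j"
proof -
  have "y = x + (y $ i - x $ i) *\<^sub>R axis i 1 + (y $ j - x $ j) *\<^sub>R axis j 1"
    using assms by (auto simp: vec_eq_iff axis_def)
  then have "y \<bullet> w = (x + (y $ i - x $ i) *\<^sub>R axis i 1 + (y $ j - x $ j) *\<^sub>R axis j 1) \<bullet> w"
    by (rule arg_cong)
  also have "\<dots> = x \<bullet> w + (y $ i - x $ i) * w $ i + (y $ j - x $ j) * w $ j"
    by (simp add: inner_add_left inner_axis')
  finally show ?thesis .
qed

lemma swap_coords_mem_cube: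
  "swap_coords i j (b, x) \<in> {0..1} \<times> cbox 0 1 \<longleftrightarrow> (b, x) \<in> {0..1} \<times> cbox 0 1"
proof -
  have "(\<forall>l. x $ (if l = i then j else if l = j then i else l) \<in> {0..1}) \<longleftrightarrow> (\<forall>l. x $ l \<in> {0..1})"
    by (metis (full_types))
  then show ?thesis
    by (simp add: swap_coords_def mem_box_cart)
qed

lemma exchange_coord_mem_cube:
  "exchange_coord k (b, x) \<in> {0..1} \<times> cbox 0 1 \<longleftrightarrow> (b, x) \<in> {0..1} \<times> cbox 0 1"
  by (auto simp: exchange_coord_def repl_coord_def mem_box_cart)

lemma indicator_flip_set_outside:
  assumes "p \<notin> {0..1} \<times> cbox 0 1"
  shows "indicator (flip_set w q k) p = 0"
  using assms flip_set_subset[of w q k] by (intro indicator_simps(2)) blast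

lemma indicator_flip_set:
  assumes "(b, x) \<in> {0..1} \<times> cbox 0 1"
  shows "indicator (flip_set w q k) (b, x) = (of_bool ((q \<le> repl_coord x k b \<bullet> w) \<noteq> (q \<le> x \<bullet> w)) :: real)"
  using assms by (simp add: flip_set_def indicator_def)

lemma flip_set_triple_le:
  fixes w :: "real ^ 'n"
  assumes ij: "i \<noteq> j" and w_ij: "w $ j \<le> w $ i" and w_j: "0 \<le> w $ j"
  shows "indicator (flip_set w q j) p + indicator (flip_set w q j) (swap_coords i j p)
        + indicator (flip_set w q j) (exchange_coord i p)
      \<le> (indicator (flip_set w q i) p + indicator (flip_set w q i) (swap_coords i j p)
        + indicator (flip_set w q i) (exchange_coord j p) :: real)"
proof -
  obtain b x where p: "p = (b, x)"
    by (cases p)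
  show ?thesis
  proof (cases "p \<in> {0..1} \<times> cbox 0 1")
    case False
    then have "swap_coords i j p \<notin> {0..1} \<times> cbox 0 1" "exchange_coord i p \<notin> {0..1} \<times> cbox 0 1"
      "exchange_coord j p \<notin> {0..1} \<times> cbox 0 1"
      unfolding p swap_coords_mem_cube exchange_coord_mem_cube by simp_all
    with False show ?thesis
      by (simp add: indicator_flip_set_outside)
  next
    case True
    define a c where "a = x $ i" and "c = x $ j"
    define P where "P s t = (q \<le> x \<bullet> w + (s - a) * w $ i + (t - c) * w $ j)" for s t
    have mono: "P s' t'" if "s \<le> s'" "t \<le> t'" "P s t" for s s' t t'
    proof -
      have "(s - a) * w $ i + (t - c) * w $ j \<le> (s' - a) * w $ i + (t' - c) * w $ j"
        using that w_ij w_j by (intro add_mono mult_right_mono) auto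
      with \<open>P s t\<close> show ?thesis
        unfolding P_def by linarith
    qed
    have swap: "P s t" if "t \<le> s" "P t s" for s t
    proof -
      have "0 \<le> (s - t) * (w $ i - w $ j)"
        using that w_ij by simp
      with \<open>P t s\<close> show ?thesis
        unfolding P_def by (simp add: algebra_simps)
    qed
    have P_inner: "(q \<le> v \<bullet> w) = P (v $ i) (v $ j)"
      if "\<And>l. l \<noteq> i \<Longrightarrow> l \<noteq> j \<Longrightarrow> v $ l = x $ l" for v
      using inner_eq_off_two_coords[OF ij that] by (simp add: P_def a_def c_def)
    \<comment> \<open>All eight points at which \<open>v\<close> is evaluated have their \<open>(i, j)\<close>-coordinates in \<open>{a, b, c}\<close>.\<close>
    let ?x' = "\<chi> l. x $ (if l = i then j else if l = j then i else l)"
    have Q: "(q \<le> x \<bullet> w) = P a c"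
      "(q \<le> repl_coord x i b \<bullet> w) = P b c"
      "(q \<le> repl_coord x j b \<bullet> w) = P a b"
      "(q \<le> ?x' \<bullet> w) = P c a"
      "(q \<le> repl_coord ?x' i b \<bullet> w) = P b a"
      "(q \<le> repl_coord ?x' j b \<bullet> w) = P c b"
      "(q \<le> repl_coord (repl_coord x i b) j a \<bullet> w) = P b a"
      "(q \<le> repl_coord (repl_coord x j b) i c \<bullet> w) = P c b"
      using ij not_sym[OF ij] by (simp_all add: P_inner repl_coord_def a_def c_def)
    have images: "swap_coords i j (b, x) = (b, ?x')" "exchange_coord i (b, x) = (a, repl_coord x i b)"
      "exchange_coord j (b, x) = (c, repl_coord x j b)"
      by (simp_all add: swap_coords_def exchange_coord_def a_def c_def)
    have cube: "(b, ?x') \<in> {0..1} \<times> cbox 0 1" "(a, repl_coord x i b) \<in> {0..1} \<times> cbox 0 1"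
      "(c, repl_coord x j b) \<in> {0..1} \<times> cbox 0 1"
      using True unfolding p images[symmetric] swap_coords_mem_cube exchange_coord_mem_cube by simp_all
    note indicators = indicator_flip_set[OF True[unfolded p]] indicator_flip_set[OF cube(1)]
      indicator_flip_set[OF cube(2)] indicator_flip_set[OF cube(3)]
    have "of_bool (P a b \<noteq> P a c) + of_bool (P b a \<noteq> P b c) + of_bool (P c b \<noteq> P c a)
        \<le> (of_bool (P b a \<noteq> P c a) + of_bool (P c b \<noteq> P a b) + of_bool (P b c \<noteq> P a c) :: real)"
      by (rule row_flips_le_column_flips) (blast intro: mono swap)+
    then show ?thesis
      unfolding p images indicators Q by linarith
  qed
qed

theorem mainTheorem10:
  fixes w :: "real ^ 'n" and q :: real and i j :: 'n
  assumes "i \<noteq> j" and "w $ i \<ge> w $ j" and "w $ j > 0"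
  shows "chi_infl i w q \<ge> chi_infl j w q"
proof -
  let ?Si = "flip_set w q i" and ?Sj = "flip_set w q j" and ?\<sigma> = "swap_coords i j"
  have "3 * emeasure lborel ?Sj = (\<integral>\<^sup>+p. ennreal (indicator ?Sj p + indicator ?Sj (?\<sigma> p)
      + indicator ?Sj (exchange_coord i p)) \<partial>lborel)"
    by (rule nn_integral_indicator_sum_preserving[symmetric]) (simp_all add: linear_swap_coords
        distr_lborel_swap_coords linear_exchange_coord distr_lborel_exchange_coord flip_set_borel)
  also have "\<dots> \<le> (\<integral>\<^sup>+p. ennreal (indicator ?Si p + indicator ?Si (?\<sigma> p)
      + indicator ?Si (exchange_coord j p)) \<partial>lborel)"
    using assms by (intro nn_integral_mono ennreal_leI flip_set_triple_le) auto
  also have "\<dots> = 3 * emeasure lborel ?Si"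
    by (rule nn_integral_indicator_sum_preserving) (simp_all add: linear_swap_coords
        distr_lborel_swap_coords linear_exchange_coord distr_lborel_exchange_coord flip_set_borel)
  finally have "emeasure lborel ?Sj \<le> emeasure lborel ?Si"
    by (simp add: ennreal_mult_le_mult_iff)
  then have "measure lborel ?Sj \<le> measure lborel ?Si"
    unfolding measure_def using emeasure_flip_set_finite[of w q i]
    by (intro enn2real_mono) (simp_all add: infinity_ennreal_def)
  then show ?thesis
    by (simp add: chi_infl_eq_measure)
qed

end
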